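(* For every perfect square $n$ and every integer $1\le k\le n$, \[\left|\mathbb E_{x\in\mathcal S(\sqrt n)}[x_1x_2\cdots x_k]\right|\le k^{3k}\,n^{-k/2}.\]
   Context: $\mathcal S(\sqrt n)=\{x\in\{\pm1\}^n:\sum_{i=1}^n x_i=\sqrt n\}$, and $x$ is uniform on $\mathcal S(\sqrt n)$. *)

theory Defs
  imports Complex_Main
begin

text \<open>The slice S(t) = {x in {-1,1}^n : x_1 + ... + x_n = t}; vectors are lists of
length n, coordinate x_i (1-based) is x ! (i-1).\<close>
definition slice :: "nat \<Rightarrow> real \<Rightarrow> int list set" where
  "slice n t = {x. length x = n \<and> set x \<subseteq> {-1, 1} \<and> real_of_int (sum_list x) = t}"

definition unif_expect :: "'a set \<Rightarrow> ('a \<Rightarrow> real) \<Rightarrow> real" where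
  "unif_expect A f = (\<Sum>x\<in>A. f x) / real (card A)"

end

theory Submission
  imports Defs "HOL-Combinatorics.Permutations"
begin

text \<open>Let \<open>E(I)\<close> be the average of \<open>\<Prod>i\<in>I. x i\<close> over the slice \<open>S(t)\<close>. Permuting
  coordinates preserves the slice, so \<open>E(I)\<close> depends only on \<open>|I|\<close>; write \<open>E j\<close>. Multiplying
  \<open>x 1 \<cdots> x j\<close> by \<open>t = \<Sum>i. x i\<close> and using \<open>(x i)\<^sup>2 = 1\<close> gives the three-term recurrence
  \<open>t E j = j E (j - 1) + (n - j) E (j + 1)\<close>. While \<open>j \<le> n/2\<close> the coefficient \<open>n - j\<close> is at
  least \<open>n/2 \<ge> t\<^sup>2/2\<close>, so solving for \<open>E (j + 1)\<close> propagates the bounds \<open>t^j |E j| \<le> a j\<close>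
  with \<open>a (j + 2) = 2 (a (j + 1) + (j + 1) a j)\<close>, and \<open>a k \<le> k^(3k)\<close>. For \<open>k > n/2 + 1\<close>
  the trivial bound \<open>|E k| \<le> 1\<close> suffices, because then \<open>n \<le> k\<^sup>6\<close>.\<close>

lemma unif_expect_cong:
  "(\<And>x. x \<in> A \<Longrightarrow> f x = g x) \<Longrightarrow> unif_expect A f = unif_expect A g"
  by (simp add: unif_expect_def)

lemma unif_expect_cmult: "unif_expect A (\<lambda>x. c * f x) = c * unif_expect A f"
  by (simp add: unif_expect_def sum_distrib_left)

lemma unif_expect_sum:
  "unif_expect A (\<lambda>x. \<Sum>i\<in>I. f i x) = (\<Sum>i\<in>I. unif_expect A (f i))"
  by (simp add: unif_expect_def sum.swap[of _ I] sum_divide_distrib)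

lemma abs_unif_expect_le:
  assumes "\<And>x. x \<in> A \<Longrightarrow> \<bar>f x\<bar> \<le> 1"
  shows "\<bar>unif_expect A f\<bar> \<le> 1"
proof (cases "finite A \<and> A \<noteq> {}")
  case True
  have "\<bar>sum f A\<bar> \<le> (\<Sum>x\<in>A. \<bar>f x\<bar>)"
    by (rule sum_abs)
  also have "\<dots> \<le> (\<Sum>x\<in>A. 1)"
    by (rule sum_mono) (rule assms)
  finally have "\<bar>sum f A\<bar> \<le> real (card A)"
    by simp
  moreover have "real (card A) > 0"
    using True by (simp add: card_gt_0_iff)
  ultimately show ?thesis
    unfolding unif_expect_def abs_divide by simp
next
  case False
  then show ?thesis
    by (auto simp: unif_expect_def)
qed

lemma permutes_with_image:
  assumes "finite A" "I \<subseteq> A" "J \<subseteq> A" "card I = card J"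
  obtains p where "p permutes A" "p ` I = J"
proof -
  have "finite I" "finite J"
    using assms finite_subset by auto
  then obtain g where g: "bij_betw g I J"
    using assms(4) finite_same_card_bij by blast
  have "card (A - I) = card (A - J)"
    using assms \<open>finite I\<close> \<open>finite J\<close> by (simp add: card_Diff_subset)
  then obtain h where h: "bij_betw h (A - I) (A - J)"
    using assms(1) finite_same_card_bij by blast
  define p where "p x = (if x \<in> I then g x else if x \<in> A then h x else x)" for x
  have "bij_betw p I J \<longleftrightarrow> bij_betw g I J"
    by (rule bij_betw_cong) (simp add: p_def)
  moreover have "bij_betw p (A - I) (A - J) \<longleftrightarrow> bij_betw h (A - I) (A - J)"
    by (rule bij_betw_cong) (simp add: p_def)
  ultimately have pIJ: "bij_betw p I J" and "bij_betw p (A - I) (A - J)"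
    using g h by simp_all
  then have "bij_betw p (I \<union> (A - I)) (J \<union> (A - J))"
    by (rule bij_betw_combine) blast
  moreover have "I \<union> (A - I) = A" "J \<union> (A - J) = A"
    using assms(2,3) by auto
  ultimately have "bij_betw p A A"
    by simp
  moreover have "p x = x" if "x \<notin> A" for x
    using that assms(2) by (auto simp: p_def)
  ultimately have "p permutes A"
    by (rule bij_imp_permutes)
  then show ?thesis
    using pIJ by (intro that bij_betw_imp_surj_on)
qed

lemma finite_slice: "finite (slice n t)"
proof -
  have "slice n t \<subseteq> {x. set x \<subseteq> {-1, 1} \<and> length x = n}"
    by (auto simp: slice_def)
  moreover have "finite {x. set x \<subseteq> {-1::int, 1} \<and> length x = n}"
    by (rule finite_lists_length_eq) simp
  ultimately show ?thesis
    by (rule finite_subset)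
qed

lemma slice_nth:
  assumes "x \<in> slice n t" "i < n"
  shows "x ! i \<in> {-1, 1}"
proof -
  have "length x = n" "set x \<subseteq> {-1, 1}"
    using assms(1) by (auto simp: slice_def)
  then show ?thesis
    using assms(2) nth_mem by blast
qed

lemma sum_slice:
  assumes "x \<in> slice n t"
  shows "(\<Sum>i<n. real_of_int (x ! i)) = t"
  using assms by (auto simp: slice_def sum_list_sum_nth atLeast0LessThan)

lemma permute_list_in_slice:
  assumes "p permutes {..<n}" "x \<in> slice n t"
  shows "permute_list p x \<in> slice n t"
proof -
  have "mset (permute_list p x) = mset x"
    using assms by (simp add: slice_def)
  then show ?thesis
    using assms(2) mset_eq_setD[of "permute_list p x" x]
    by (auto simp: slice_def simp flip: sum_mset_sum_list)
qed

lemma inj_on_permute_list: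
  assumes "p permutes {..<n}"
  shows "inj_on (permute_list p) {xs. length xs = n}"
proof (rule inj_onI)
  fix xs ys :: "'a list"
  assume len: "xs \<in> {xs. length xs = n}" "ys \<in> {xs. length xs = n}"
    and eq: "permute_list p xs = permute_list p ys"
  have "xs ! p l = ys ! p l" if "l < n" for l
    using permute_list_nth[of p xs l] permute_list_nth[of p ys l] eq len assms that by simp
  then have "xs ! i = ys ! i" if "i < n" for i
    using permutes_image[OF assms] that by (metis imageE lessThan_iff)
  then show "xs = ys"
    using len by (auto intro: nth_equalityI)
qed

lemma bij_betw_permute_list_slice:
  assumes "p permutes {..<n}"
  shows "bij_betw (permute_list p) (slice n t) (slice n t)"
proof -
  have "inj_on (permute_list p) (slice n t)"
    by (rule inj_on_subset[OF inj_on_permute_list[OF assms]]) (auto simp: slice_def)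
  moreover have "permute_list p ` slice n t = slice n t"
    using assms permute_list_in_slice calculation by (intro endo_inj_surj finite_slice) auto
  ultimately show ?thesis
    by (simp add: bij_betw_def)
qed

definition slice_moment :: "nat \<Rightarrow> real \<Rightarrow> nat set \<Rightarrow> real" where
  "slice_moment n t I = unif_expect (slice n t) (\<lambda>x. \<Prod>i\<in>I. real_of_int (x ! i))"

lemma slice_moment_permutes:
  assumes "p permutes {..<n}" "I \<subseteq> {..<n}"
  shows "slice_moment n t (p ` I) = slice_moment n t I"
proof -
  have "slice_moment n t (p ` I)
      = unif_expect (slice n t) (\<lambda>x. \<Prod>i\<in>I. real_of_int (permute_list p x ! i))"
    unfolding slice_moment_def using assms
    by (intro unif_expect_cong)
       (auto simp: prod.reindex permutes_inj_on[OF assms(1)] permute_list_nth slice_def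
             intro!: prod.cong)
  also have "\<dots> = slice_moment n t I"
    unfolding slice_moment_def unif_expect_def
    using sum.reindex_bij_betw[OF bij_betw_permute_list_slice[OF assms(1)],
        of "\<lambda>x. \<Prod>i\<in>I. real_of_int (x ! i)"] by simp
  finally show ?thesis .
qed

lemma slice_moment_card:
  assumes "I \<subseteq> {..<n}"
  shows "slice_moment n t I = slice_moment n t {..<card I}"
proof -
  have "card I \<le> n"
    using card_mono[OF _ assms] by simp
  then obtain p where "p permutes {..<n}" "p ` {..<card I} = I"
    using permutes_with_image[of "{..<n}" "{..<card I}" I] assms by auto
  then show ?thesis
    using slice_moment_permutes[of p n "{..<card I}" t] \<open>card I \<le> n\<close> by auto
qed

lemma mult_prod_toggle:
  fixes f :: "'a \<Rightarrow> 'b::comm_monoid_mult"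
  assumes "f i * f i = 1" "finite J"
  shows "f i * prod f J = prod f (if i \<in> J then J - {i} else insert i J)"
  using assms by (auto simp: prod.remove mult.assoc[symmetric])

(* For j = 0 the truncated j - 1 is harmless: its coefficient vanishes. *)
lemma slice_moment_recurrence:
  assumes "j < n"
  shows "t * slice_moment n t {..<j}
    = real j * slice_moment n t {..<j - 1} + real (n - j) * slice_moment n t {..<Suc j}"
proof -
  let ?E = "slice_moment n t"
  let ?x = "\<lambda>x i. real_of_int (x ! i)"
  let ?J = "\<lambda>i. if i < j then {..<j} - {i} else insert i {..<j}"
  have toggle: "?x x i * (\<Prod>l<j. ?x x l) = (\<Prod>l\<in>?J i. ?x x l)"
    if "x \<in> slice n t" "i < n" for x i
    using mult_prod_toggle[of "?x x" i "{..<j}"] slice_nth[OF that] by auto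
  have moment_toggle: "?E (?J i) = (if i < j then ?E {..<j - 1} else ?E {..<Suc j})"
    if "i < n" for i
  proof -
    have "?J i \<subseteq> {..<n}"
      using that assms by auto
    then show ?thesis
      using slice_moment_card[of "?J i" n t] by auto
  qed
  have "t * ?E {..<j} = unif_expect (slice n t) (\<lambda>x. \<Sum>i<n. ?x x i * (\<Prod>l<j. ?x x l))"
    unfolding slice_moment_def unif_expect_cmult[symmetric]
    by (intro unif_expect_cong) (simp add: sum_slice flip: sum_distrib_right)
  also have "\<dots> = (\<Sum>i<n. ?E (?J i))"
    unfolding unif_expect_sum slice_moment_def
    by (intro sum.cong refl unif_expect_cong) (simp add: toggle)
  also have "\<dots> = (\<Sum>i<n. if i < j then ?E {..<j - 1} else ?E {..<Suc j})"
    by (intro sum.cong refl) (simp add: moment_toggle)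
  also have "\<dots> = real j * ?E {..<j - 1} + real (n - j) * ?E {..<Suc j}"
  proof -
    have "{..<n} \<inter> {i. i < j} = {..<j}" "{..<n} \<inter> - {i. i < j} = {j..<n}"
      using assms by auto
    then show ?thesis
      by (simp add: sum.If_cases)
  qed
  finally show ?thesis .
qed

lemma abs_slice_moment_le_1:
  assumes "I \<subseteq> {..<n}"
  shows "\<bar>slice_moment n t I\<bar> \<le> 1"
  unfolding slice_moment_def
proof (rule abs_unif_expect_le)
  fix x assume "x \<in> slice n t"
  then have "\<bar>real_of_int (x ! i)\<bar> = 1" if "i \<in> I" for i
  proof -
    have "x ! i \<in> {-1, 1}"
      using slice_nth \<open>x \<in> slice n t\<close> assms that by blast
    then show ?thesis
      by auto
  qed
  then show "\<bar>\<Prod>i\<in>I. real_of_int (x ! i)\<bar> \<le> 1"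
    by (simp add: abs_prod)
qed

fun moment_coeff :: "nat \<Rightarrow> real" where
  "moment_coeff 0 = 1"
| "moment_coeff (Suc 0) = 1"
| "moment_coeff (Suc (Suc j)) = 2 * (moment_coeff (Suc j) + real (Suc j) * moment_coeff j)"

lemma moment_coeff_le: "moment_coeff k \<le> real k ^ (3 * k)"
proof (induction k rule: moment_coeff.induct)
  case (3 j)
  let ?b = "real (Suc j)" and ?c = "real (Suc (Suc j))"
  have "moment_coeff j \<le> ?b ^ (3 * j)"
    by (rule order_trans[OF "3.IH"(2)]) (rule power_mono; simp)
  then have "?b * moment_coeff j \<le> ?b * ?b ^ (3 * j)"
    by (rule mult_left_mono) simp
  also have "\<dots> \<le> ?b ^ (3 * j + 3)"
    by (subst power_Suc[symmetric]) (rule power_increasing, auto)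
  finally have "?b * moment_coeff j \<le> ?b ^ (3 * j + 3)" .
  moreover have "moment_coeff (Suc j) \<le> ?b ^ (3 * j + 3)"
    using "3.IH"(1) by (simp add: add.commute)
  ultimately have "moment_coeff (Suc (Suc j)) \<le> 4 * ?b ^ (3 * j + 3)"
    by simp
  also have "\<dots> \<le> ?c ^ 3 * ?c ^ (3 * j + 3)"
  proof (rule mult_mono)
    have "(2::real) ^ 3 \<le> ?c ^ 3"
      by (rule power_mono) auto
    then show "4 \<le> ?c ^ 3"
      by simp
  qed (auto intro: power_mono)
  also have "\<dots> = ?c ^ (3 * Suc (Suc j))"
    by (simp add: power_add[symmetric])
  finally show ?case .
qed simp_all

lemma slice_moment_bound:
  assumes "t > 0" "t\<^sup>2 \<le> real n" "2 * j \<le> n + 2"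
  shows "t ^ j * \<bar>slice_moment n t {..<j}\<bar> \<le> moment_coeff j"
  using assms(3)
proof (induction j rule: moment_coeff.induct)
  case 1
  show ?case
    using abs_slice_moment_le_1[of "{..<0}" n t] by simp
next
  case 2
  let ?E = "\<lambda>i. slice_moment n t {..<i}"
  have "0 < n"
    using assms(1,2) by (metis of_nat_0_less_iff order_less_le_trans zero_less_power)
  then have "real n * ?E 1 = t * ?E 0"
    using slice_moment_recurrence[of 0 n t] by simp
  then have "real n * \<bar>?E 1\<bar> = t * \<bar>?E 0\<bar>"
    using assms(1) by (metis abs_mult abs_of_nat abs_of_pos)
  also have "\<dots> \<le> t"
    using assms(1) abs_slice_moment_le_1[of "{..<0}" n t] by (simp add: mult_left_le)
  finally have "real n * \<bar>?E 1\<bar> \<le> t" .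
  moreover have "t\<^sup>2 * \<bar>?E 1\<bar> \<le> real n * \<bar>?E 1\<bar>"
    using assms(2) by (rule mult_right_mono) simp
  ultimately have "t * (t * \<bar>?E 1\<bar>) \<le> t * 1"
    by (simp add: power2_eq_square mult.assoc)
  then show ?case
    using assms(1) by simp
next
  case (3 j)
  let ?E = "\<lambda>i. slice_moment n t {..<i}" and ?a = moment_coeff
  have IH: "t ^ j * \<bar>?E j\<bar> \<le> ?a j" "t ^ Suc j * \<bar>?E (Suc j)\<bar> \<le> ?a (Suc j)"
    using 3 by simp_all
  define d where "d = real (n - Suc j)"
  have "t\<^sup>2 \<le> 2 * d"
    using "3.prems" assms(2) by (simp add: d_def of_nat_diff)
  have "d * ?E (Suc (Suc j)) = t * ?E (Suc j) - real (Suc j) * ?E j"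
    using slice_moment_recurrence[of "Suc j" n t] "3.prems" by (simp add: d_def)
  then have "d * \<bar>?E (Suc (Suc j))\<bar> \<le> t * \<bar>?E (Suc j)\<bar> + real (Suc j) * \<bar>?E j\<bar>"
    using assms(1) abs_triangle_ineq4[of "t * ?E (Suc j)" "real (Suc j) * ?E j"]
    by (simp add: abs_mult d_def)
  then have "t ^ j * (d * \<bar>?E (Suc (Suc j))\<bar>)
      \<le> t ^ Suc j * \<bar>?E (Suc j)\<bar> + real (Suc j) * (t ^ j * \<bar>?E j\<bar>)"
    using assms(1) by (auto dest: mult_left_mono[of _ _ "t ^ j"] simp: algebra_simps)
  also have "\<dots> \<le> ?a (Suc j) + real (Suc j) * ?a j"
    using IH by (intro add_mono mult_left_mono) auto
  finally have "t ^ j * (2 * d) * \<bar>?E (Suc (Suc j))\<bar> \<le> ?a (Suc (Suc j))"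
    by (simp add: algebra_simps)
  moreover have "t ^ j * t\<^sup>2 * \<bar>?E (Suc (Suc j))\<bar> \<le> t ^ j * (2 * d) * \<bar>?E (Suc (Suc j))\<bar>"
    using \<open>t\<^sup>2 \<le> 2 * d\<close> assms(1) by (intro mult_right_mono mult_left_mono) auto
  ultimately show ?case
    by (simp add: power_add[symmetric] mult.commute)
qed

lemma powr_minus_half: "0 < x \<Longrightarrow> x powr (- real k / 2) = 1 / sqrt x ^ k"
  by (simp add: powr_minus_divide powr_half_sqrt_powr powr_realpow real_sqrt_power)

lemma sqrt_power_le_power_cube:
  assumes "2 \<le> k" "n \<le> 2 * k"
  shows "sqrt (real n) ^ k \<le> real k ^ (3 * k)"
proof -
  have "n \<le> k ^ 2"
    unfolding power2_eq_square using assms mult_le_mono1[OF assms(1), of k] by linarith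
  also have "\<dots> \<le> (k ^ 3)\<^sup>2"
    using assms(1) by (simp flip: power_mult)
  finally have "sqrt (real n) \<le> real k ^ 3"
    by (intro real_le_lsqrt) (simp_all flip: of_nat_power)
  then show ?thesis
    by (simp add: power_mult power_mono)
qed

theorem corollaryB7:
  fixes n k :: nat
  assumes "\<exists>m::nat. n = m ^ 2"
    and "1 \<le> k" and "k \<le> n"
  shows "\<bar>unif_expect (slice n (sqrt (real n))) (\<lambda>x. \<Prod>i<k. real_of_int (x ! i))\<bar>
           \<le> real k ^ (3 * k) * real n powr (- real k / 2)"
proof -
  let ?t = "sqrt (real n)"
  let ?E = "slice_moment n ?t {..<k}"
  have t: "?t > 0" "?t\<^sup>2 \<le> real n"
    using assms(2,3) by simp_all
  have "?t ^ k * \<bar>?E\<bar> \<le> real k ^ (3 * k)"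
  proof (cases "2 * k \<le> n + 2")
    case True
    then show ?thesis
      using slice_moment_bound[OF t True] moment_coeff_le[of k] by linarith
  next
    case False
    then have "?t ^ k \<le> real k ^ (3 * k)"
      using assms(3) by (intro sqrt_power_le_power_cube) auto
    moreover have "\<bar>?E\<bar> \<le> 1"
      using assms(3) by (intro abs_slice_moment_le_1) auto
    ultimately show ?thesis
      using t(1) by (meson mult_left_le order_trans zero_le_power less_imp_le)
  qed
  then show ?thesis
    using t(1) by (subst powr_minus_half) (simp_all add: slice_moment_def pos_le_divide_eq mult.commute)
qed

end
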